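(* Let $\mathcal R=(\mathbf N,G,\mathcal P)$ be a max game and let $\mathbf p$ be a routing. If a greedy move by some player $i$ takes $\mathbf p$ to a routing $\mathbf p'$, then $\mathbf p'<\mathbf p$ in the order defined below (i.e. $M(\mathbf p')<M(\mathbf p)$).
   Context: A routing game is a tuple $\mathcal R=(\mathbf N,G,\mathcal P)$: players $\mathbf N=\{1,\dots,N\}$ ($N\ge1$), a graph $G=(V,E)$ with $n=|V|$ nodes, and for each player $i$ a nonempty finite set $\mathcal P_i$ of paths in $G$ from a source $u_i$ to a destination $v_i$; $\mathcal P=\bigcup_i\mathcal P_i$. A routing is $\mathbf p=[p_1,\dots,p_N]$ with $p_i\in\mathcal P_i$; $(p_i';\mathbf p_{-i})$ denotes the routing obtained by replacing $p_i$ with $p_i'$. For an edge $e$, $C_e(\mathbf p)$ is the number of players $j$ with $e\in p_j$; $C_i(\mathbf p)=\max_{e\in p_i}C_e(\mathbf p)$; $D_i(\mathbf p)=|p_i|$ (number of edges); $C(\mathbf p)=\max_{e\in E}C_e(\mathbf p)$; $D(\mathbf p)=\max_i|p_i|$; $L=\max_{p\in\mathcal P}|p|$. A max game is a routing game with player cost $pc_i(\mathbf p)=\max(C_i(\mathbf p),D_i(\mathbf p))$ and social cost $SC(\mathbf p)=\max(C(\mathbf p),D(\mathbf p))$. A greedy move by player $i$ takes $\mathbf p$ to $\mathbf p'=(p_i';\mathbf p_{-i})$ for some $p_i'\in\mathcal P_i$ with $pc_i(\mathbf p')<pc_i(\mathbf p)$. Order: let $r=\max(N,L)$; the routing vector is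 $M(\mathbf p)=[m_1(\mathbf p),\dots,m_r(\mathbf p)]$ with $m_k(\mathbf p)=a_k(\mathbf p)+b_k(\mathbf p)$, where $a_k(\mathbf p)$ is the number of players $j$ with $C_j(\mathbf p)=k$ and $b_k(\mathbf p)$ is the number of players $j$ with $D_j(\mathbf p)=k$. Write $M(\mathbf p')<M(\mathbf p)$ (and $\mathbf p'<\mathbf p$) if there is $j\in\{1,\dots,r\}$ with $m_k(\mathbf p')=m_k(\mathbf p)$ for all $k>j$ and $m_j(\mathbf p')<m_j(\mathbf p)$. *)

theory Defs
  imports Main
begin

definition path_edges :: "'v list \<Rightarrow> 'v set set" where
  "path_edges p = {{p ! k, p ! Suc k} | k. Suc k < length p}"

definition path_len :: "'v list \<Rightarrow> nat" where
  "path_len p = length p - 1"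

definition is_path :: "'v set \<Rightarrow> 'v set set \<Rightarrow> 'v \<Rightarrow> 'v \<Rightarrow> 'v list \<Rightarrow> bool" where
  "is_path V E u v p \<longleftrightarrow> p \<noteq> [] \<and> hd p = u \<and> last p = v \<and> distinct p
     \<and> set p \<subseteq> V \<and> (\<forall>k. Suc k < length p \<longrightarrow> {p ! k, p ! Suc k} \<in> E)"

definition routing_game ::
  "nat \<Rightarrow> 'v set \<Rightarrow> 'v set set \<Rightarrow> (nat \<Rightarrow> 'v) \<Rightarrow> (nat \<Rightarrow> 'v) \<Rightarrow> (nat \<Rightarrow> 'v list set) \<Rightarrow> bool" where
  "routing_game N V E src dst P \<longleftrightarrow> N \<ge> 1 \<and> finite V
     \<and> (\<forall>e\<in>E. e \<subseteq> V \<and> card e = 2)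
     \<and> (\<forall>i\<in>{1..N}. finite (P i) \<and> P i \<noteq> {}
          \<and> (\<forall>p\<in>P i. is_path V E (src i) (dst i) p))"

definition is_routing :: "nat \<Rightarrow> (nat \<Rightarrow> 'v list set) \<Rightarrow> (nat \<Rightarrow> 'v list) \<Rightarrow> bool" where
  "is_routing N P p \<longleftrightarrow> (\<forall>i\<in>{1..N}. p i \<in> P i)"

definition edge_cong :: "nat \<Rightarrow> (nat \<Rightarrow> 'v list) \<Rightarrow> 'v set \<Rightarrow> nat" where
  "edge_cong N p e = card {j\<in>{1..N}. e \<in> path_edges (p j)}"

text \<open>C_i(p): max congestion on the edges of p_i (0 for a path with no edges).\<close>
definition player_cong :: "nat \<Rightarrow> (nat \<Rightarrow> 'v list) \<Rightarrow> nat \<Rightarrow> nat" where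
  "player_cong N p i = Max (insert 0 (edge_cong N p ` path_edges (p i)))"

definition player_len :: "(nat \<Rightarrow> 'v list) \<Rightarrow> nat \<Rightarrow> nat" where
  "player_len p i = path_len (p i)"

definition player_cost :: "nat \<Rightarrow> (nat \<Rightarrow> 'v list) \<Rightarrow> nat \<Rightarrow> nat" where
  "player_cost N p i = max (player_cong N p i) (player_len p i)"

definition max_path_len :: "nat \<Rightarrow> (nat \<Rightarrow> 'v list set) \<Rightarrow> nat" where
  "max_path_len N P = Max (path_len ` (\<Union>i\<in>{1..N}. P i))"

definition rvec_len :: "nat \<Rightarrow> (nat \<Rightarrow> 'v list set) \<Rightarrow> nat" where
  "rvec_len N P = max N (max_path_len N P)"

definition rvec_entry :: "nat \<Rightarrow> (nat \<Rightarrow> 'v list) \<Rightarrow> nat \<Rightarrow> nat" where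
  "rvec_entry N p k = card {j\<in>{1..N}. player_cong N p j = k}
                    + card {j\<in>{1..N}. player_len p j = k}"

definition routing_less ::
  "nat \<Rightarrow> (nat \<Rightarrow> 'v list set) \<Rightarrow> (nat \<Rightarrow> 'v list) \<Rightarrow> (nat \<Rightarrow> 'v list) \<Rightarrow> bool" where
  "routing_less N P p' p \<longleftrightarrow> (\<exists>j\<in>{1..rvec_len N P}.
      (\<forall>k. j < k \<and> k \<le> rvec_len N P \<longrightarrow> rvec_entry N p' k = rvec_entry N p k)
      \<and> rvec_entry N p' j < rvec_entry N p j)"

end

theory Submission
  imports Defs
begin

(* Let player i deviate from p to q, giving p' = p(i := q), and let
   c = pc_i(p) > pc_i(p').  Only edges of p_i lose a user and only edges of q gain
   one, so (1) a congestion C_j(p') can exceed C_j(p) only up to C_i(p') < c, and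
   (2) a congestion C_j(p) > C_i(p) cannot drop, since it is attained on an edge
   that p_i does not use.  Hence above c nothing changes: for every level k > c
   the players with C_j = k and with D_j = k are the same in p and p'.  At level c
   the level sets of p' lose player i (whose cost was c, attained by C_i or D_i)
   and gain nobody.  So M(p') and M(p) agree above index c and m_c strictly drops;
   finally c <= max(N, L), which makes c an admissible index of the vector. *)

lemma finite_path_edges: "finite (path_edges p)"
proof -
  have "path_edges p = (\<lambda>k. {p ! k, p ! Suc k}) ` {k. Suc k < length p}"
    unfolding path_edges_def by auto
  moreover have "finite {k. Suc k < length p}"
    by (rule finite_subset[of _ "{..<length p}"]) auto
  ultimately show ?thesis by simp
qed

lemma edge_cong_le_player_cong:
  "e \<in> path_edges (p j) \<Longrightarrow> edge_cong N p e \<le> player_cong N p j"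
  unfolding player_cong_def by (simp add: finite_path_edges)

lemma player_cong_le:
  assumes "\<And>e. e \<in> path_edges (p j) \<Longrightarrow> edge_cong N p e \<le> b"
  shows "player_cong N p j \<le> b"
  unfolding player_cong_def using assms by (simp add: finite_path_edges)

lemma player_cong_attained:
  assumes "player_cong N p j > 0"
  obtains e where "e \<in> path_edges (p j)" "edge_cong N p e = player_cong N p j"
proof -
  have "finite (insert 0 (edge_cong N p ` path_edges (p j)))"
    by (simp add: finite_path_edges)
  then have "player_cong N p j \<in> insert 0 (edge_cong N p ` path_edges (p j))"
    unfolding player_cong_def by (rule Max_in) simp
  with assms that show ?thesis by auto
qed

lemma player_cong_le_N: "player_cong N p j \<le> N"
proof (rule player_cong_le)
  fix e
  have "edge_cong N p e \<le> card {1..N}"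
    unfolding edge_cong_def by (rule card_mono) auto
  then show "edge_cong N p e \<le> N" by simp
qed

lemma edge_cong_update_le:
  "e \<notin> path_edges q \<Longrightarrow> edge_cong N (p(i := q)) e \<le> edge_cong N p e"
  unfolding edge_cong_def by (rule card_mono) auto

lemma edge_cong_update_ge:
  "e \<notin> path_edges (p i) \<Longrightarrow> edge_cong N p e \<le> edge_cong N (p(i := q)) e"
  unfolding edge_cong_def by (rule card_mono) auto

lemma player_cong_deviation_upper:
  "player_cong N (p(i := q)) j \<le> max (player_cong N p j) (player_cong N (p(i := q)) i)"
proof (rule player_cong_le)
  fix e assume e: "e \<in> path_edges ((p(i := q)) j)"
  show "edge_cong N (p(i := q)) e \<le> max (player_cong N p j) (player_cong N (p(i := q)) i)"
  proof (cases "e \<in> path_edges q")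
    case True
    then have "edge_cong N (p(i := q)) e \<le> player_cong N (p(i := q)) i"
      by (intro edge_cong_le_player_cong) simp
    then show ?thesis by simp
  next
    case False
    with e have "j \<noteq> i" by auto
    with e have "edge_cong N p e \<le> player_cong N p j"
      by (intro edge_cong_le_player_cong) simp
    with edge_cong_update_le[OF False, of N p i] show ?thesis by simp
  qed
qed

text \<open>A congestion strictly above the old congestion of the deviating player
  cannot decrease: it is attained on an edge the deviating player did not use.\<close>
lemma player_cong_deviation_lower:
  assumes "j \<noteq> i" and "player_cong N p i < player_cong N p j"
  shows "player_cong N p j \<le> player_cong N (p(i := q)) j"
proof -
  obtain e where e: "e \<in> path_edges (p j)" "edge_cong N p e = player_cong N p j"
    using player_cong_attained[of N p j] assms(2) by auto
  have "e \<notin> path_edges (p i)"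
    using edge_cong_le_player_cong[of e p i N] e assms(2) by auto
  then have "edge_cong N p e \<le> edge_cong N (p(i := q)) e"
    by (rule edge_cong_update_ge)
  also have "\<dots> \<le> player_cong N (p(i := q)) j"
    using e assms(1) by (intro edge_cong_le_player_cong) simp
  finally show ?thesis using e by simp
qed

lemma cong_level_deviation:
  assumes old: "player_cost N p i \<le> c" and new: "player_cost N (p(i := q)) i < c"
    and "c \<le> k" and "j \<noteq> i"
  shows "player_cong N (p(i := q)) j = k \<Longrightarrow> player_cong N p j = k"
    and "c < k \<Longrightarrow> player_cong N p j = k \<Longrightarrow> player_cong N (p(i := q)) j = k"
proof -
  have pi: "player_cong N p i \<le> c" using old by (simp add: player_cost_def)
  have qi: "player_cong N (p(i := q)) i < c" using new by (simp add: player_cost_def)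
  note upper = player_cong_deviation_upper[of N p i q j]
  note lower = player_cong_deviation_lower[OF \<open>j \<noteq> i\<close>, of N p q]
  show "player_cong N (p(i := q)) j = k \<Longrightarrow> player_cong N p j = k"
    using upper lower pi qi \<open>c \<le> k\<close> by linarith
  show "c < k \<Longrightarrow> player_cong N p j = k \<Longrightarrow> player_cong N (p(i := q)) j = k"
    using upper lower pi qi by linarith
qed

lemma cong_level_sub:
  assumes "player_cost N p i \<le> c" "player_cost N (p(i := q)) i < c" "c \<le> k"
  shows "{j\<in>{1..N}. player_cong N (p(i := q)) j = k}
           \<subseteq> {j\<in>{1..N}. player_cong N p j = k} - {i}"
proof -
  have i_below: "player_cong N (p(i := q)) i < k"
    using assms(2,3) by (simp add: player_cost_def)
  show ?thesis
  proof
    fix j assume j: "j \<in> {j\<in>{1..N}. player_cong N (p(i := q)) j = k}"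
    with i_below have "j \<noteq> i" by auto
    with j show "j \<in> {j\<in>{1..N}. player_cong N p j = k} - {i}"
      using cong_level_deviation(1)[OF assms \<open>j \<noteq> i\<close>] by auto
  qed
qed

lemma cong_level_eq:
  assumes "player_cost N p i \<le> c" "player_cost N (p(i := q)) i < c" "c < k"
  shows "{j\<in>{1..N}. player_cong N (p(i := q)) j = k} = {j\<in>{1..N}. player_cong N p j = k}"
proof -
  have "player_cong N (p(i := q)) i \<noteq> k" "player_cong N p i \<noteq> k"
    using assms by (simp_all add: player_cost_def)
  then show ?thesis
    using cong_level_deviation[OF assms(1,2) less_imp_le[OF assms(3)]] assms(3) by fastforce
qed

lemma len_level_sub:
  assumes "player_cost N (p(i := q)) i < c" "c \<le> k"
  shows "{j\<in>{1..N}. player_len (p(i := q)) j = k} \<subseteq> {j\<in>{1..N}. player_len p j = k} - {i}"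
  using assms by (auto simp: player_cost_def player_len_def split: if_splits)

lemma len_level_eq:
  assumes "player_cost N p i \<le> c" "player_cost N (p(i := q)) i < c" "c < k"
  shows "{j\<in>{1..N}. player_len (p(i := q)) j = k} = {j\<in>{1..N}. player_len p j = k}"
  using assms by (auto simp: player_cost_def player_len_def)

lemma rvec_entry_above:
  assumes "player_cost N p i \<le> c" "player_cost N (p(i := q)) i < c" "c < k"
  shows "rvec_entry N (p(i := q)) k = rvec_entry N p k"
  unfolding rvec_entry_def using cong_level_eq[OF assms] len_level_eq[OF assms] by simp

text \<open>At the old cost of the deviating player the entry strictly drops: the level
  sets only shrink and player i leaves the one attaining its old cost.\<close>
lemma rvec_entry_at_cost:
  assumes "i \<in> {1..N}" and c: "c = player_cost N p i"
    and new: "player_cost N (p(i := q)) i < c"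
  shows "rvec_entry N (p(i := q)) c < rvec_entry N p c"
proof -
  define A' A B' B where
    "A' = {j\<in>{1..N}. player_cong N (p(i := q)) j = c}" and "A = {j\<in>{1..N}. player_cong N p j = c}"
    and "B' = {j\<in>{1..N}. player_len (p(i := q)) j = c}" and "B = {j\<in>{1..N}. player_len p j = c}"
  have sub: "A' \<subseteq> A - {i}" "B' \<subseteq> B - {i}"
    unfolding A'_def A_def B'_def B_def
    using cong_level_sub[of N p i c q c] len_level_sub[of N p i q c c] c new by auto
  have fin: "finite A" "finite B" unfolding A_def B_def by auto
  have "i \<in> A \<or> i \<in> B"
    using assms(1) c unfolding A_def B_def player_cost_def by (auto simp: max_def)
  then have "card A' + card B' < card A + card B"
  proof
    assume "i \<in> A"
    then have "card A' < card A" using sub fin by (intro psubset_card_mono) auto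
    moreover have "card B' \<le> card B" using sub fin by (intro card_mono) auto
    ultimately show ?thesis by simp
  next
    assume "i \<in> B"
    then have "card B' < card B" using sub fin by (intro psubset_card_mono) auto
    moreover have "card A' \<le> card A" using sub fin by (intro card_mono) auto
    ultimately show ?thesis by simp
  qed
  then show ?thesis unfolding rvec_entry_def A'_def A_def B'_def B_def .
qed

lemma player_cost_le_rvec_len:
  assumes "routing_game N V E src dst P" "is_routing N P p" "i \<in> {1..N}"
  shows "player_cost N p i \<le> rvec_len N P"
proof -
  have "finite (\<Union>i\<in>{1..N}. P i)" using assms(1) unfolding routing_game_def by auto
  moreover have "p i \<in> (\<Union>i\<in>{1..N}. P i)" using assms(2,3) unfolding is_routing_def by force
  ultimately have "player_len p i \<le> max_path_len N P"
    unfolding max_path_len_def player_len_def by simp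
  then show ?thesis
    using player_cong_le_N[of N p i]
    unfolding player_cost_def rvec_len_def by linarith
qed

theorem mainTheorem1:
  fixes N :: nat and V :: "'v set" and E :: "'v set set"
    and src dst :: "nat \<Rightarrow> 'v" and P :: "nat \<Rightarrow> 'v list set"
    and p :: "nat \<Rightarrow> 'v list" and i :: nat and q :: "'v list"
  assumes "routing_game N V E src dst P"
    and "is_routing N P p"
    and "i \<in> {1..N}"
    and "q \<in> P i"
    and "player_cost N (p(i := q)) i < player_cost N p i"
  shows "routing_less N P (p(i := q)) p"
proof -
  define c where "c = player_cost N p i"
  have new: "player_cost N (p(i := q)) i < c" using assms(5) by (simp add: c_def)
  have "c \<in> {1..rvec_len N P}"
    using new player_cost_le_rvec_len[OF assms(1-3)] by (simp add: c_def)
  moreover have "\<forall>k. c < k \<and> k \<le> rvec_len N P \<longrightarrow>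
                   rvec_entry N (p(i := q)) k = rvec_entry N p k"
    using rvec_entry_above[of N p i c q] new by (simp add: c_def)
  moreover have "rvec_entry N (p(i := q)) c < rvec_entry N p c"
    using rvec_entry_at_cost[OF assms(3) c_def new] .
  ultimately show ?thesis unfolding routing_less_def by blast
qed

end
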